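(* Let $D$, $i$, $j$, $s$ be integers with $0\le i<j\le D$ and $s\ge1$, and let $D-j=i_s<i_{s-1}<\dots<i_0=D-i$ be integers. Then \[\prod_{r=0}^{s-1}c_{i_r,-i_{r+1}}\le\max(T_1,T_2,T_2',T_3,T_3',T_4),\] where (with $0^0=1$) \begin{align*} T_1&=(1728-e^{2\pi})^{j-i}s^{j-i}\frac{(D-i)^{D-i}}{(D-j)^{D-j}(j-i)^{j-i}},& T_2&=2981^{D-i}\,1.25^{D-j},& T_2'&=(2393s)^{D-i}\,1.45^{j-i},\\ T_3&=(2386s)^{D-i}\,2924^{-(D-j)},& T_3'&=5849^{D-i}\,2924^{-(D-j)},& T_4&=1728^{D-i}e^{-2\pi(D-j)}. \end{align*} Moreover, if $D-j>c(D-i)$ then the product is at most $T_1$. In particular, with $\mathcal A=5849$ and $\mathcal B=1.5$, \[\prod_{r=0}^{s-1}c_{i_r,-i_{r+1}}\le\max\big(T_1,(\mathcal As)^{D-i}\mathcal B^{D-j}\big).\]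
   Context: $q=e^{2\pi iz}$, $j$ is the modular $j$-invariant, and for $r\ge1$ the integers $c_{r,n}$ are defined by $j^r=\sum_{n\ge-r}c_{r,n}q^n$. Let $c=e^{2\pi}/1728$. *)

theory Defs
  imports "HOL-Analysis.Analysis" "HOL-Computational_Algebra.Formal_Power_Series"
begin

text \<open>The q-expansion of the modular j-invariant, j = E4^3 / Delta, as formal series.
  E4 = 1 + 240 sum sigma_3(n) q^n,  Delta = q * prod_{n>=1} (1 - q^n)^24.\<close>

definition E4_fps :: "real fps" where
  "E4_fps = Abs_fps (\<lambda>n. if n = 0 then 1 else 240 * (\<Sum>d\<in>{d. d dvd n}. real d ^ 3))"

text \<open>The formal infinite product prod_{n>=1} (1 - q^n)^24: its k-th coefficient
  agrees with that of the finite product over n = 1..k.\<close>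
definition eta24_fps :: "real fps" where
  "eta24_fps = Abs_fps (\<lambda>k. fps_nth ((\<Prod>n\<in>{1..k}. (1 - fps_X ^ n)) ^ 24) k)"

definition qj_fps :: "real fps" where
  "qj_fps = E4_fps ^ 3 * inverse eta24_fps"

text \<open>jcoeff r n = c_{r,n}, the coefficient of q^n in j^r = q^{-r} (q j)^r.\<close>
definition jcoeff :: "nat \<Rightarrow> int \<Rightarrow> real" where
  "jcoeff r n = (if n + int r < 0 then 0 else fps_nth (qj_fps ^ r) (nat (n + int r)))"

definition cconst :: real where
  "cconst = exp (2 * pi) / 1728"

definition T1 :: "int \<Rightarrow> int \<Rightarrow> int \<Rightarrow> nat \<Rightarrow> real" where
  "T1 D i j s = (1728 - exp (2 * pi)) ^ nat (j - i) * real s ^ nat (j - i)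
     * real_of_int (D - i) ^ nat (D - i)
     / (real_of_int (D - j) ^ nat (D - j) * real_of_int (j - i) ^ nat (j - i))"

definition T2 :: "int \<Rightarrow> int \<Rightarrow> int \<Rightarrow> nat \<Rightarrow> real" where
  "T2 D i j s = 2981 ^ nat (D - i) * 1.25 ^ nat (D - j)"

definition T2' :: "int \<Rightarrow> int \<Rightarrow> int \<Rightarrow> nat \<Rightarrow> real" where
  "T2' D i j s = (2393 * real s) ^ nat (D - i) * 1.45 ^ nat (j - i)"

definition T3 :: "int \<Rightarrow> int \<Rightarrow> int \<Rightarrow> nat \<Rightarrow> real" where
  "T3 D i j s = (2386 * real s) ^ nat (D - i) / 2924 ^ nat (D - j)"

definition T3' :: "int \<Rightarrow> int \<Rightarrow> int \<Rightarrow> nat \<Rightarrow> real" where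
  "T3' D i j s = 5849 ^ nat (D - i) / 2924 ^ nat (D - j)"

definition T4 :: "int \<Rightarrow> int \<Rightarrow> int \<Rightarrow> nat \<Rightarrow> real" where
  "T4 D i j s = 1728 ^ nat (D - i) * exp (- 2 * pi * real_of_int (D - j))"

end

theory Submission
  imports Defs
begin

text \<open>
  The series q j = E4^3 / prod (1 - q^n)^24 has nonnegative coefficients, so the coefficients of
  its powers obey Cauchy's estimate [q^d] (q j)^R \<le> G(y)^R / y^d for 0 < y < 1/16, where
  G(y) = (1 + 240 y / (1 - 16 y))^3 ((1 - y) / (1 - 2 y))^24 majorises the truncations of q j.
  As q j has constant term 1, these truncations also lie below their chords on [0, x]. Choosing y
  gives [q^d] (q j)^R \<le> (3300 R / d)^d in general, and
  [q^d] (q j)^(m+d) \<le> K^d (m+d)^(m+d) / (m^m d^d) with K = 1728 - e^(2 pi) when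
  d / (m+d) < K / 1728: at the optimal y = d / (K m) if this is at most 1/800, and otherwise at
  y = 1/800, where the loss is the relative entropy of the binomial weight, bounded by its
  chi-square distance.

  c_(i_r, -i_(r+1)) is the coefficient of q^(i_r - i_(r+1)) in (q j)^(i_r). Multiplying along the
  chain, the factors i_r^(i_r) / i_(r+1)^(i_(r+1)) telescope, and by convexity of x log x the
  increments d_r, which sum to j - i, satisfy prod d_r^(d_r) \<ge> ((j - i) / s)^(j - i). This
  gives T2' for every chain, which implies the other two bounds, and T1 when D - j > c (D - i).
\<close>

section \<open>Truncated evaluation of power series with nonnegative coefficients\<close>

definition fps_nonneg :: "'a::{zero,ord} fps \<Rightarrow> bool" where
  "fps_nonneg F \<longleftrightarrow> (\<forall>n. 0 \<le> fps_nth F n)"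

definition fps_eval_upto :: "nat \<Rightarrow> 'a::comm_semiring_1 fps \<Rightarrow> 'a \<Rightarrow> 'a" where
  "fps_eval_upto N F x = (\<Sum>n\<le>N. fps_nth F n * x ^ n)"

lemma fps_nonneg_mult:
  fixes F G :: "'a::linordered_idom fps"
  shows "fps_nonneg F \<Longrightarrow> fps_nonneg G \<Longrightarrow> fps_nonneg (F * G)"
  unfolding fps_nonneg_def fps_mult_nth by (auto intro!: sum_nonneg)

lemma fps_nonneg_power:
  fixes F :: "'a::linordered_idom fps"
  shows "fps_nonneg F \<Longrightarrow> fps_nonneg (F ^ k)"
  by (induction k) (auto simp: fps_nonneg_mult, simp add: fps_nonneg_def)

lemma fps_nonneg_prod:
  fixes F :: "'i \<Rightarrow> 'a::linordered_idom fps"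
  shows "(\<And>n. n \<in> A \<Longrightarrow> fps_nonneg (F n)) \<Longrightarrow> fps_nonneg (\<Prod>n\<in>A. F n)"
  by (induction A rule: infinite_finite_induct)
     (auto simp: fps_nonneg_mult, auto simp: fps_nonneg_def)

lemma fps_eval_upto_nonneg:
  fixes F :: "'a::linordered_idom fps"
  shows "fps_nonneg F \<Longrightarrow> 0 \<le> x \<Longrightarrow> 0 \<le> fps_eval_upto N F x"
  unfolding fps_eval_upto_def fps_nonneg_def by (auto intro!: sum_nonneg)

lemma fps_eval_upto_one [simp]: "fps_eval_upto N 1 x = 1"
  unfolding fps_eval_upto_def by (simp add: sum.atMost_shift)

lemma fps_eval_upto_add: "fps_eval_upto N (F + G) x = fps_eval_upto N F x + fps_eval_upto N G x"
  unfolding fps_eval_upto_def by (simp add: distrib_right sum.distrib)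

lemma fps_eval_upto_X_power_le:
  fixes x :: "'a::linordered_idom"
  assumes "0 \<le> x"
  shows "fps_eval_upto N (fps_X ^ n) x \<le> x ^ n"
proof -
  have "fps_eval_upto N (fps_X ^ n) x = (\<Sum>k\<le>N. if k = n then x ^ n else 0)"
    unfolding fps_eval_upto_def by (intro sum.cong) auto
  then show ?thesis using assms by (simp add: sum.delta)
qed

lemma fps_eval_upto_cutoff_cong:
  "fps_cutoff (Suc N) F = fps_cutoff (Suc N) G \<Longrightarrow> fps_eval_upto N F x = fps_eval_upto N G x"
  unfolding fps_eval_upto_def fps_cutoff_eq_fps_cutoff_iff by (intro sum.cong) auto

lemma fps_eval_upto_mult_le:
  fixes F G :: "'a::linordered_idom fps"
  assumes F: "fps_nonneg F" and G: "fps_nonneg G" and x: "0 \<le> x"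
  shows "fps_eval_upto N (F * G) x \<le> fps_eval_upto N F x * fps_eval_upto N G x"
proof -
  let ?f = "\<lambda>i. fps_nth F i * x ^ i" and ?g = "\<lambda>j. fps_nth G j * x ^ j"
  have "fps_eval_upto N (F * G) x = (\<Sum>k\<le>N. \<Sum>i\<le>k. ?f i * ?g (k - i))"
    unfolding fps_eval_upto_def fps_mult_nth atLeast0AtMost sum_distrib_right
    by (intro sum.cong refl) (simp add: mult_ac power_add[symmetric])
  also have "\<dots> = (\<Sum>(i, j)\<in>{(i, j). i + j \<le> N}. ?f i * ?g j)"
    by (rule sum.triangle_reindex_eq[symmetric])
  also have "\<dots> \<le> (\<Sum>(i, j)\<in>{..N} \<times> {..N}. ?f i * ?g j)"
    using F G x unfolding fps_nonneg_def by (intro sum_mono2) auto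
  also have "\<dots> = fps_eval_upto N F x * fps_eval_upto N G x"
    unfolding fps_eval_upto_def by (simp add: sum_product sum.cartesian_product)
  finally show ?thesis .
qed

lemma fps_eval_upto_power_le:
  fixes F :: "'a::linordered_idom fps"
  assumes F: "fps_nonneg F" and x: "0 \<le> x"
  shows "fps_eval_upto N (F ^ k) x \<le> fps_eval_upto N F x ^ k"
proof (induction k)
  case (Suc k)
  have "fps_eval_upto N (F * F ^ k) x \<le> fps_eval_upto N F x * fps_eval_upto N (F ^ k) x"
    by (rule fps_eval_upto_mult_le[OF F fps_nonneg_power[OF F] x])
  also have "\<dots> \<le> fps_eval_upto N F x * fps_eval_upto N F x ^ k"
    by (intro mult_left_mono Suc fps_eval_upto_nonneg F x)
  finally show ?case by simp
qed simp

lemma fps_eval_upto_prod_le: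
  fixes F :: "'i \<Rightarrow> 'a::linordered_idom fps"
  assumes "finite A" "\<And>n. n \<in> A \<Longrightarrow> fps_nonneg (F n)" "0 \<le> x"
  shows "fps_eval_upto N (\<Prod>n\<in>A. F n) x \<le> (\<Prod>n\<in>A. fps_eval_upto N (F n) x)"
  using assms
proof (induction A rule: finite_induct)
  case (insert a A)
  have "fps_eval_upto N (F a * (\<Prod>n\<in>A. F n)) x
          \<le> fps_eval_upto N (F a) x * fps_eval_upto N (\<Prod>n\<in>A. F n) x"
    using insert by (intro fps_eval_upto_mult_le fps_nonneg_prod) auto
  also have "\<dots> \<le> fps_eval_upto N (F a) x * (\<Prod>n\<in>A. fps_eval_upto N (F n) x)"
    using insert by (intro mult_left_mono fps_eval_upto_nonneg) auto
  finally show ?case using insert by simp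
qed simp

lemma fps_power_nth_le:
  fixes F :: "'a::linordered_field fps"
  assumes F: "fps_nonneg F" and x: "0 < x"
  shows "fps_nth (F ^ R) d \<le> fps_eval_upto d F x ^ R / x ^ d"
proof -
  have "fps_nth (F ^ R) d * x ^ d \<le> fps_eval_upto d (F ^ R) x"
    using fps_nonneg_power[OF F] x unfolding fps_eval_upto_def fps_nonneg_def
    by (intro member_le_sum) auto
  also have "\<dots> \<le> fps_eval_upto d F x ^ R"
    using F x by (intro fps_eval_upto_power_le) auto
  finally show ?thesis using x by (simp add: pos_le_divide_eq)
qed

lemma fps_eval_upto_le_chord:
  fixes F :: "'a::linordered_field fps"
  assumes F: "fps_nonneg F" and F0: "fps_nth F 0 = 1" and y: "0 \<le> y" "y \<le> x"
  shows "fps_eval_upto N F y \<le> 1 + y / x * (fps_eval_upto N F x - 1)"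
proof (cases "y = 0")
  case True
  then show ?thesis using F0 by (simp add: fps_eval_upto_def sum.atMost_shift)
next
  case False
  with y have x: "0 < x" by simp
  have tail: "fps_eval_upto N F z = 1 + (\<Sum>n\<in>{1..N}. fps_nth F n * z ^ n)" for z
    using F0 by (simp add: fps_eval_upto_def atMost_atLeast0 sum.atLeast_Suc_atMost)
  have "(\<Sum>n\<in>{1..N}. fps_nth F n * y ^ n) \<le> (\<Sum>n\<in>{1..N}. y / x * (fps_nth F n * x ^ n))"
  proof (intro sum_mono)
    fix n assume n: "n \<in> {1..N}"
    have "(y / x) ^ n \<le> (y / x) ^ 1"
      using n y x by (intro power_decreasing) auto
    then have "y ^ n \<le> y / x * x ^ n"
      using x by (simp add: power_divide field_simps)
    then show "fps_nth F n * y ^ n \<le> y / x * (fps_nth F n * x ^ n)"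
      using F unfolding fps_nonneg_def by (metis mult.left_commute mult_left_mono)
  qed
  then show ?thesis unfolding tail by (simp add: sum_distrib_left)
qed

lemma inverse_one_minus_X_power_unfold:
  assumes "0 < n"
  shows "inverse (1 - fps_X ^ n :: 'a::field fps) = 1 + fps_X ^ n * inverse (1 - fps_X ^ n)"
proof -
  have "inverse (1 - fps_X ^ n) * (1 - fps_X ^ n :: 'a fps) = 1"
    using assms by (intro inverse_mult_eq_1) simp
  then show ?thesis by (simp add: algebra_simps)
qed

lemma fps_nonneg_inverse_one_minus_X_power:
  assumes n: "0 < n"
  shows "fps_nonneg (inverse (1 - fps_X ^ n :: 'a::linordered_field fps))"
  unfolding fps_nonneg_def
proof
  fix k
  show "0 \<le> fps_nth (inverse (1 - fps_X ^ n :: 'a fps)) k"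
  proof (induction k rule: less_induct)
    case (less k)
    then show ?case
      using n by (subst inverse_one_minus_X_power_unfold[OF n]) (simp add: fps_X_power_mult_nth)
  qed
qed

lemma fps_eval_upto_inverse_one_minus_X_power_le:
  fixes x :: "'a::linordered_field"
  assumes n: "0 < n" and x: "0 \<le> x" "x < 1"
  shows "fps_eval_upto N (inverse (1 - fps_X ^ n)) x \<le> 1 / (1 - x ^ n)"
proof -
  let ?F = "inverse (1 - fps_X ^ n) :: 'a fps"
  have F: "fps_nonneg ?F" using n by (rule fps_nonneg_inverse_one_minus_X_power)
  have "fps_eval_upto N ?F x = 1 + fps_eval_upto N (fps_X ^ n * ?F) x"
    by (subst inverse_one_minus_X_power_unfold[OF n]) (simp add: fps_eval_upto_add)
  also have "\<dots> \<le> 1 + fps_eval_upto N (fps_X ^ n) x * fps_eval_upto N ?F x"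
    using fps_eval_upto_mult_le[of "fps_X ^ n" ?F x N] F x by (simp add: fps_nonneg_def)
  also have "\<dots> \<le> 1 + x ^ n * fps_eval_upto N ?F x"
    using fps_eval_upto_X_power_le[OF x(1)] fps_eval_upto_nonneg[OF F x(1)]
    by (simp add: mult_right_mono)
  finally have "fps_eval_upto N ?F x * (1 - x ^ n) \<le> 1" by (simp add: algebra_simps)
  moreover have "x ^ n < 1" using x n by (simp add: power_less_one_iff)
  ultimately show ?thesis by (simp add: field_simps)
qed

section \<open>Agreement of power series up to a given degree\<close>

lemma fps_cutoff_mult_cong:
  fixes f g f' g' :: "'a::comm_ring_1 fps"
  assumes f: "fps_cutoff n f = fps_cutoff n f'" and g: "fps_cutoff n g = fps_cutoff n g'"
  shows "fps_cutoff n (f * g) = fps_cutoff n (f' * g')"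
proof -
  have cut: "fps_nth (h * l) k = fps_nth (fps_cutoff n h * fps_cutoff n l) k"
    if "k < n" for h l :: "'a fps" and k
    using that by (simp add: fps_cutoff_left_mult_nth fps_cutoff_right_mult_nth)
  show ?thesis
    unfolding fps_cutoff_eq_fps_cutoff_iff using cut[of _ f g] cut[of _ f' g'] by (simp add: f g)
qed

lemma fps_cutoff_power_cong:
  fixes f g :: "'a::comm_ring_1 fps"
  assumes "fps_cutoff n f = fps_cutoff n g"
  shows "fps_cutoff n (f ^ k) = fps_cutoff n (g ^ k)"
proof (induction k)
  case (Suc k)
  then show ?case unfolding power_Suc by (rule fps_cutoff_mult_cong[OF assms])
qed simp

lemma fps_cutoff_prod_cong:
  fixes f g :: "'i \<Rightarrow> 'a::comm_ring_1 fps"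
  assumes "\<And>x. x \<in> A \<Longrightarrow> fps_cutoff n (f x) = fps_cutoff n (g x)"
  shows "fps_cutoff n (\<Prod>x\<in>A. f x) = fps_cutoff n (\<Prod>x\<in>A. g x)"
  using assms
proof (induction A rule: infinite_finite_induct)
  case (insert a A)
  then show ?case unfolding prod.insert[OF insert(1,2)] by (intro fps_cutoff_mult_cong) auto
qed simp_all

lemma fps_cutoff_inverse_cong:
  fixes f g :: "'a::field fps"
  assumes f0: "fps_nth f 0 \<noteq> 0" and fg: "fps_cutoff n f = fps_cutoff n g"
  shows "fps_cutoff n (inverse f) = fps_cutoff n (inverse g)"
proof (cases n)
  case (Suc m)
  then have g0: "fps_nth g 0 \<noteq> 0"
    using f0 fg by (metis fps_cutoff_eq_fps_cutoff_iff zero_less_Suc)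
  have "inverse f * inverse g * (g - f) = inverse f * (inverse g * g) - inverse g * (inverse f * f)"
    by (simp add: algebra_simps)
  then have "inverse f - inverse g = inverse f * inverse g * (g - f)"
    using f0 g0 by (simp add: inverse_mult_eq_1)
  moreover have "fps_cutoff n (inverse f * inverse g * (g - f)) = fps_cutoff n (inverse f * inverse g * 0)"
    using fg by (intro fps_cutoff_mult_cong) (simp_all add: fps_cutoff_diff)
  ultimately have "fps_cutoff n (inverse f - inverse g) = 0" by simp
  then show ?thesis by (simp add: fps_cutoff_diff)
qed simp

section \<open>A majorant for q j\<close>

lemma euler_partial_prod_cutoff:
  assumes "k \<le> N"
  shows "fps_cutoff (Suc k) (\<Prod>n\<in>{1..N}. 1 - fps_X ^ n :: 'a::comm_ring_1 fps)
       = fps_cutoff (Suc k) (\<Prod>n\<in>{1..k}. 1 - fps_X ^ n)"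
proof -
  have "{1..N} = {1..k} \<union> {Suc k..N}" "{1..k} \<inter> {Suc k..N} = {}" using assms by auto
  then have split: "(\<Prod>n\<in>{1..N}. 1 - fps_X ^ n :: 'a fps)
      = (\<Prod>n\<in>{1..k}. 1 - fps_X ^ n) * (\<Prod>n\<in>{Suc k..N}. 1 - fps_X ^ n)"
    by (simp add: prod.union_disjoint)
  have "fps_cutoff (Suc k) (\<Prod>n\<in>{Suc k..N}. 1 - fps_X ^ n :: 'a fps)
      = fps_cutoff (Suc k) (\<Prod>n\<in>{Suc k..N}. 1)"
    by (intro fps_cutoff_prod_cong) (auto simp: fps_cutoff_eq_fps_cutoff_iff)
  then show ?thesis
    unfolding split by (subst mult_1_right[symmetric], intro fps_cutoff_mult_cong) simp_all
qed

lemma eta24_fps_cutoff: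
  "fps_cutoff (Suc N) eta24_fps = fps_cutoff (Suc N) ((\<Prod>n\<in>{1..N}. 1 - fps_X ^ n) ^ 24)"
  unfolding fps_cutoff_eq_fps_cutoff_iff
proof (intro allI impI)
  fix k assume "k < Suc N"
  then have "fps_cutoff (Suc k) ((\<Prod>n\<in>{1..N}. 1 - fps_X ^ n) ^ 24)
      = fps_cutoff (Suc k) ((\<Prod>n\<in>{1..k}. 1 - fps_X ^ n :: real fps) ^ 24)"
    by (intro fps_cutoff_power_cong euler_partial_prod_cutoff) simp
  then show "fps_nth eta24_fps k = fps_nth ((\<Prod>n\<in>{1..N}. 1 - fps_X ^ n) ^ 24) k"
    unfolding eta24_fps_def fps_cutoff_eq_fps_cutoff_iff by simp
qed

lemma inverse_eta24_fps_cutoff: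
  "fps_cutoff (Suc N) (inverse eta24_fps)
     = fps_cutoff (Suc N) ((\<Prod>n\<in>{1..N}. inverse (1 - fps_X ^ n)) ^ 24)"
proof -
  have "fps_nth eta24_fps 0 \<noteq> 0" by (simp add: eta24_fps_def)
  then have "fps_cutoff (Suc N) (inverse eta24_fps)
      = fps_cutoff (Suc N) (inverse ((\<Prod>n\<in>{1..N}. 1 - fps_X ^ n) ^ 24))"
    by (intro fps_cutoff_inverse_cong eta24_fps_cutoff)
  then show ?thesis by (simp add: fps_inverse_power inverse_prod_fps)
qed

lemma fps_nonneg_inverse_eta24: "fps_nonneg (inverse eta24_fps)"
  unfolding fps_nonneg_def
proof
  fix k
  have "fps_nonneg ((\<Prod>n\<in>{1..k}. inverse (1 - fps_X ^ n :: real fps)) ^ 24)"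
    by (intro fps_nonneg_power fps_nonneg_prod fps_nonneg_inverse_one_minus_X_power) auto
  then show "0 \<le> fps_nth (inverse eta24_fps) k"
    using inverse_eta24_fps_cutoff[of k] unfolding fps_nonneg_def fps_cutoff_eq_fps_cutoff_iff
    by (metis lessI)
qed

lemma sum_power_atLeast1_le:
  fixes y :: "'a::linordered_field"
  assumes "0 \<le> y" "y < 1"
  shows "(\<Sum>n\<in>{1..N}. y ^ n) \<le> y / (1 - y)"
proof -
  have "(1 - y) * (\<Sum>n\<in>{1..N}. y ^ n) \<le> y"
    using sum_gp_multiplied[of 1 N y] assms by (cases N) auto
  then show ?thesis using assms by (simp add: pos_le_divide_eq mult.commute)
qed

lemma prod_inverse_one_minus_power_le:
  fixes x :: real
  assumes x: "0 \<le> x" "x \<le> 1/4"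
  shows "(\<Prod>n\<in>{1..N}. 1 / (1 - x ^ n)) \<le> (1 - x) / (1 - 2 * x)"
proof -
  define P where "P = (\<Prod>n\<in>{1..N}. 1 - x ^ n)"
  have "(\<Sum>n\<in>{1..N}. x ^ n) \<le> x / (1 - x)"
    using x by (intro sum_power_atLeast1_le) auto
  then have "1 - 2 * x \<le> (1 - x) * (1 - (\<Sum>n\<in>{1..N}. x ^ n))"
    using x by (simp add: field_simps)
  also have "\<dots> \<le> (1 - x) * P"
    unfolding P_def using x by (intro mult_left_mono Weierstrass_prod_ineq) (auto simp: power_le_one)
  finally have P: "1 - 2 * x \<le> (1 - x) * P" .
  have "0 < P"
    unfolding P_def using x by (intro prod_pos) (auto simp: power_less_one_iff)
  have "(\<Prod>n\<in>{1..N}. 1 / (1 - x ^ n)) = (1 - x) / ((1 - x) * P)"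
    using x by (simp add: P_def prod_dividef)
  also have "\<dots> \<le> (1 - x) / (1 - 2 * x)"
    using P \<open>0 < P\<close> x by (intro divide_left_mono) auto
  finally show ?thesis .
qed

lemma fps_eval_upto_inverse_eta24_le:
  assumes x: "0 \<le> x" "x \<le> 1/4"
  shows "fps_eval_upto N (inverse eta24_fps) x \<le> ((1 - x) / (1 - 2 * x)) ^ 24"
proof -
  define F where "F = (\<Prod>n\<in>{1..N}. inverse (1 - fps_X ^ n :: real fps))"
  have F: "fps_nonneg F"
    unfolding F_def by (intro fps_nonneg_prod fps_nonneg_inverse_one_minus_X_power) auto
  have "fps_eval_upto N (inverse eta24_fps) x = fps_eval_upto N (F ^ 24) x"
    unfolding F_def by (rule fps_eval_upto_cutoff_cong[OF inverse_eta24_fps_cutoff])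
  also have "\<dots> \<le> fps_eval_upto N F x ^ 24"
    by (rule fps_eval_upto_power_le[OF F x(1)])
  also have "\<dots> \<le> ((1 - x) / (1 - 2 * x)) ^ 24"
  proof (rule power_mono)
    have "fps_eval_upto N F x \<le> (\<Prod>n\<in>{1..N}. fps_eval_upto N (inverse (1 - fps_X ^ n)) x)"
      unfolding F_def using x
      by (intro fps_eval_upto_prod_le fps_nonneg_inverse_one_minus_X_power) auto
    also have "\<dots> \<le> (\<Prod>n\<in>{1..N}. 1 / (1 - x ^ n))"
      using x by (intro prod_mono conjI fps_eval_upto_nonneg fps_nonneg_inverse_one_minus_X_power
          fps_eval_upto_inverse_one_minus_X_power_le) auto
    also have "\<dots> \<le> (1 - x) / (1 - 2 * x)"
      by (rule prod_inverse_one_minus_power_le[OF x])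
    finally show "fps_eval_upto N F x \<le> (1 - x) / (1 - 2 * x)" .
    show "0 \<le> fps_eval_upto N F x" by (rule fps_eval_upto_nonneg[OF F x(1)])
  qed
  finally show ?thesis .
qed

lemma real_power4_le_16_power: "1 \<le> n \<Longrightarrow> real n ^ 4 \<le> 16 ^ (n - 1)"
proof (induction n rule: dec_induct)
  case (step n)
  have "real (Suc n) ^ 4 \<le> (2 * real n) ^ 4"
    using step by (intro power_mono) auto
  also have "\<dots> \<le> 16 * 16 ^ (n - 1)"
    using step by (simp add: power_mult_distrib)
  also have "\<dots> = 16 ^ (Suc n - 1)"
    using step by (cases n) auto
  finally show ?case .
qed simp

lemma E4_fps_nth_le: "fps_nth E4_fps n \<le> 15 * 16 ^ n"
proof (cases "n = 0")
  case False
  have "(\<Sum>d\<in>{d. d dvd n}. real d ^ 3) \<le> (\<Sum>d\<in>{1..n}. real d ^ 3)"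
    using False by (intro sum_mono2) (auto intro: dvd_imp_le dvd_pos_nat)
  also have "\<dots> \<le> (\<Sum>d\<in>{1..n}. real n ^ 3)"
    by (intro sum_mono power_mono) auto
  also have "\<dots> = real n ^ 4"
    by (simp add: power_Suc[symmetric] del: power_Suc)
  also have "\<dots> \<le> 16 ^ (n - 1)"
    using False by (intro real_power4_le_16_power) simp
  finally show ?thesis
    using False by (cases n) (simp_all add: E4_fps_def)
qed (simp add: E4_fps_def)

lemma fps_nonneg_E4: "fps_nonneg E4_fps"
  unfolding fps_nonneg_def E4_fps_def by (auto intro!: sum_nonneg)

lemma fps_eval_upto_E4_le:
  assumes x: "0 \<le> x" "x < 1/16"
  shows "fps_eval_upto N E4_fps x \<le> 1 + 240 * x / (1 - 16 * x)"
proof -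
  have "fps_eval_upto N E4_fps x = 1 + (\<Sum>n\<in>{1..N}. fps_nth E4_fps n * x ^ n)"
    by (simp add: fps_eval_upto_def atMost_atLeast0 sum.atLeast_Suc_atMost E4_fps_def)
  also have "(\<Sum>n\<in>{1..N}. fps_nth E4_fps n * x ^ n) \<le> (\<Sum>n\<in>{1..N}. 15 * (16 * x) ^ n)"
  proof (intro sum_mono)
    fix n
    have "fps_nth E4_fps n * x ^ n \<le> (15 * 16 ^ n) * x ^ n"
      using x by (intro mult_right_mono E4_fps_nth_le) simp
    then show "fps_nth E4_fps n * x ^ n \<le> 15 * (16 * x) ^ n"
      by (simp add: power_mult_distrib mult.assoc)
  qed
  also have "\<dots> = 15 * (\<Sum>n\<in>{1..N}. (16 * x) ^ n)"
    by (simp add: sum_distrib_left)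
  also have "\<dots> \<le> 15 * (16 * x / (1 - 16 * x))"
    using x by (intro mult_left_mono sum_power_atLeast1_le) auto
  finally show ?thesis by simp
qed

definition qj_majorant :: "real \<Rightarrow> real" where
  "qj_majorant x = (1 + 240 * x / (1 - 16 * x)) ^ 3 * ((1 - x) / (1 - 2 * x)) ^ 24"

lemma fps_nonneg_qj: "fps_nonneg qj_fps"
  unfolding qj_fps_def
  by (intro fps_nonneg_mult fps_nonneg_power fps_nonneg_E4 fps_nonneg_inverse_eta24)

lemma qj_fps_nth_0: "fps_nth qj_fps 0 = 1"
  by (simp add: qj_fps_def E4_fps_def eta24_fps_def fps_nth_power_0)

lemma fps_eval_upto_qj_le:
  assumes x: "0 \<le> x" "x < 1/16"
  shows "fps_eval_upto N qj_fps x \<le> qj_majorant x"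
proof -
  have "fps_eval_upto N qj_fps x
      \<le> fps_eval_upto N (E4_fps ^ 3) x * fps_eval_upto N (inverse eta24_fps) x"
    unfolding qj_fps_def
    by (intro fps_eval_upto_mult_le fps_nonneg_power fps_nonneg_E4 fps_nonneg_inverse_eta24 x)
  also have "\<dots> \<le> fps_eval_upto N E4_fps x ^ 3 * fps_eval_upto N (inverse eta24_fps) x"
    by (intro mult_right_mono fps_eval_upto_power_le fps_eval_upto_nonneg fps_nonneg_E4
        fps_nonneg_inverse_eta24 x)
  also have "\<dots> \<le> qj_majorant x"
    unfolding qj_majorant_def using x
    by (intro mult_mono power_mono fps_eval_upto_E4_le fps_eval_upto_inverse_eta24_le
        fps_eval_upto_nonneg fps_nonneg_E4 fps_nonneg_inverse_eta24) auto
  finally show ?thesis .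
qed

lemma qj_power_nth_le:
  assumes "0 < x" "x < 1/16"
  shows "fps_nth (qj_fps ^ R) d \<le> qj_majorant x ^ R / x ^ d"
proof -
  have "fps_nth (qj_fps ^ R) d \<le> fps_eval_upto d qj_fps x ^ R / x ^ d"
    using assms by (intro fps_power_nth_le fps_nonneg_qj)
  also have "\<dots> \<le> qj_majorant x ^ R / x ^ d"
    using assms by (intro divide_right_mono power_mono fps_eval_upto_qj_le
        fps_eval_upto_nonneg fps_nonneg_qj) auto
  finally show ?thesis .
qed

lemma qj_power_nth_le_chord:
  assumes y: "0 < y" "y \<le> x" and x: "x < 1/16" and G: "qj_majorant x \<le> 1 + L * x"
  shows "fps_nth (qj_fps ^ R) d \<le> (1 + L * y) ^ R / y ^ d"
proof -
  have "fps_eval_upto d qj_fps y \<le> 1 + y / x * (fps_eval_upto d qj_fps x - 1)"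
    using y by (intro fps_eval_upto_le_chord fps_nonneg_qj qj_fps_nth_0) auto
  also have "\<dots> \<le> 1 + y / x * (L * x)"
    using fps_eval_upto_qj_le[of x d] G y x by (intro add_left_mono mult_left_mono) auto
  also have "\<dots> = 1 + L * y"
    using y by simp
  finally have chord: "fps_eval_upto d qj_fps y \<le> 1 + L * y" .
  have "fps_nth (qj_fps ^ R) d \<le> fps_eval_upto d qj_fps y ^ R / y ^ d"
    using y by (intro fps_power_nth_le fps_nonneg_qj)
  also have "\<dots> \<le> (1 + L * y) ^ R / y ^ d"
    using y chord by (intro divide_right_mono power_mono fps_eval_upto_nonneg fps_nonneg_qj) auto
  finally show ?thesis .
qed

lemma exp_two_pi_bounds: "520 \<le> exp (2 * pi)" "exp (2 * pi) \<le> 600"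
proof -
  have y: "981/10000 \<le> 2 * pi / 64" using pi_approx by simp
  have "(11029/10000 :: real) \<le> 1 + 981/10000 + (981/10000)^2 / 2"
    by (simp add: power2_eq_square)
  also have "\<dots> \<le> 1 + 2 * pi / 64 + (2 * pi / 64)^2 / 2"
    using y by (intro add_mono power_mono divide_right_mono) auto
  also have "\<dots> \<le> exp (2 * pi / 64)"
    by (rule exp_lower_Taylor_quadratic) simp
  finally have "(11029/10000) ^ 64 \<le> exp (2 * pi / 64) ^ 64"
    by (intro power_mono) auto
  also have "\<dots> = exp (2 * pi)"
    by (simp add: exp_of_nat_mult[symmetric])
  finally show "520 \<le> exp (2 * pi)"
    by (simp add: power_divide)
  have z: "0 \<le> 2 * pi - 6" "2 * pi - 6 \<le> 2832/10000" using pi_approx by simp_all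
  have "exp (2 * pi) = exp 1 ^ 6 * exp (2 * pi - 6)"
    by (simp add: exp_of_nat_mult[symmetric] exp_add[symmetric])
  also have "\<dots> \<le> (272/100) ^ 6 * (1 + 2832/10000 + (2832/10000)^2)"
  proof (intro mult_mono power_mono)
    have "exp (2 * pi - 6) \<le> 1 + (2 * pi - 6) + (2 * pi - 6)^2"
      using z by (intro exp_bound) auto
    also have "\<dots> \<le> 1 + 2832/10000 + (2832/10000)^2"
      using z by (intro add_mono power_mono) auto
    finally show "exp (2 * pi - 6) \<le> 1 + 2832/10000 + (2832/10000)^2" .
  qed (use e_less_272 in auto)
  also have "\<dots> \<le> 600"
    by (simp add: power_divide)
  finally show "exp (2 * pi) \<le> 600" .
qed

lemma qj_majorant_1100: "qj_majorant (1/1100) \<le> 2"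
  unfolding qj_majorant_def by (simp add: power_divide)

text \<open>The factor 959/1000 = 1 - 41/1000 leaves room for the bound of \<open>chi_square_distance_le\<close>.\<close>

lemma qj_majorant_800: "qj_majorant (1/800) \<le> 959/1000 * (1 + 1128/800)"
  unfolding qj_majorant_def by (simp add: power_divide)

section \<open>Coefficients of powers of q j\<close>

lemma qj_power_nth_le_uniform:
  assumes d: "1 \<le> d" "d \<le> R"
  shows "fps_nth (qj_fps ^ R) d \<le> (3300 * real R / real d) ^ d"
proof -
  define y where "y = real d / (1100 * real R)"
  have y: "0 < y" "y \<le> 1/1100"
    using d unfolding y_def by (auto simp: field_simps)
  have "(1 + 1100 * y) ^ R = (1 + real d / real R) ^ R"
    unfolding y_def by simp
  also have "\<dots> \<le> exp (real d)"
    using d by (intro exp_ge_one_plus_x_over_n_power_n) auto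
  also have "\<dots> = exp 1 ^ d"
    by (simp add: exp_of_nat_mult[symmetric])
  also have "\<dots> \<le> 3 ^ d"
    using exp_le by (intro power_mono) auto
  finally have "(1 + 1100 * y) ^ R \<le> 3 ^ d" .
  then have "(1 + 1100 * y) ^ R / y ^ d \<le> (3 / y) ^ d"
    using y by (simp add: power_divide divide_right_mono)
  also have "3 / y = 3300 * real R / real d"
    using d unfolding y_def by (simp add: field_simps)
  finally have "(1 + 1100 * y) ^ R / y ^ d \<le> (3300 * real R / real d) ^ d" .
  moreover have "fps_nth (qj_fps ^ R) d \<le> (1 + 1100 * y) ^ R / y ^ d"
    using y qj_majorant_1100 by (intro qj_power_nth_le_chord[where x = "1/1100" and L = 1100]) auto
  ultimately show ?thesis by linarith
qed

lemma relative_entropy_le_chi_square: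
  fixes m d p :: real
  assumes "0 < m" "0 < d" "0 < p" "p < 1"
  shows "m * ln (m / ((m + d) * (1 - p))) + d * ln (d / ((m + d) * p))
           \<le> (d - (m + d) * p)^2 / ((m + d) * p * (1 - p))"
proof -
  have "m * ln (m / ((m + d) * (1 - p))) + d * ln (d / ((m + d) * p))
      \<le> m * (m / ((m + d) * (1 - p)) - 1) + d * (d / ((m + d) * p) - 1)"
    using assms by (intro add_mono mult_left_mono ln_le_minus_one) auto
  also have "\<dots> = (d - (m + d) * p)^2 / ((m + d) * p * (1 - p))"
    using assms by (simp add: divide_simps power2_eq_square) algebra
  finally show ?thesis .
qed

lemma binomial_weight_ge_exp_chi_square:
  fixes m d :: nat and p :: real
  assumes m: "0 < m" and d: "0 < d" and p: "0 < p" "p < 1"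
  shows "exp (- ((real d - real (m + d) * p)^2 / (real (m + d) * p * (1 - p))))
           \<le> real (m + d) ^ (m + d) / (real m ^ m * real d ^ d) * p ^ d * (1 - p) ^ m"
    (is "exp (- ?chi) \<le> ?W")
proof -
  have pos: "0 < real m" "0 < real d" "0 < real (m + d)" using m d by auto
  have "ln ?W = real (m + d) * ln (real (m + d)) - real m * ln (real m) - real d * ln (real d)
      + real d * ln p + real m * ln (1 - p)"
    using pos p by (simp add: ln_mult ln_div ln_realpow)
  also have "\<dots> = - (real m * (ln (real m) - ln (real (m + d)) - ln (1 - p))
      + real d * (ln (real d) - ln (real (m + d)) - ln p))"
    by (simp add: algebra_simps)
  also have "\<dots> = - (real m * ln (real m / (real (m + d) * (1 - p)))
      + real d * ln (real d / (real (m + d) * p)))"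
  proof -
    have "0 < real (m + d) * (1 - p)" "0 < real (m + d) * p" "0 < 1 - p"
      using pos p by simp_all
    then show ?thesis
      using pos p by (simp only: ln_divide_pos ln_mult_pos diff_diff_eq)
  qed
  also have "\<dots> \<ge> - ?chi"
    using relative_entropy_le_chi_square[of "real m" "real d" p] pos p by simp
  finally have "- ?chi \<le> ln ?W" .
  moreover have "0 < ?W" using pos p by simp
  ultimately show ?thesis by (metis exp_le_cancel_iff exp_ln)
qed

lemma qj_power_nth_le_entropy_near:
  fixes m d :: nat
  defines "K \<equiv> 1728 - exp (2 * pi)"
  assumes m: "1 \<le> m" and d: "1 \<le> d" and near: "800 * real d \<le> K * real m"
  shows "fps_nth (qj_fps ^ (m + d)) d \<le> K ^ d * real (m + d) ^ (m + d) / (real m ^ m * real d ^ d)"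
proof -
  have K: "1128 \<le> K" using exp_two_pi_bounds unfolding K_def by simp
  define y where "y = real d / (K * real m)"
  have y: "0 < y" "y \<le> 1/800"
    using m d K near unfolding y_def by (auto simp: field_simps)
  have "qj_majorant (1/800) \<le> 1 + K * (1/800)"
    using qj_majorant_800 K by simp
  then have "fps_nth (qj_fps ^ (m + d)) d \<le> (1 + K * y) ^ (m + d) / y ^ d"
    using y by (intro qj_power_nth_le_chord[where x = "1/800"]) auto
  also have "1 + K * y = real (m + d) / real m"
    using m K unfolding y_def by (simp add: field_simps)
  also have "(real (m + d) / real m) ^ (m + d) / y ^ d
      = K ^ d * real (m + d) ^ (m + d) / (real m ^ m * real d ^ d)"
    using m d K unfolding y_def by (simp add: power_divide power_mult_distrib power_add field_simps)
  finally show ?thesis .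
qed

lemma chi_square_distance_le:
  fixes K t :: real
  defines "p \<equiv> K / (800 + K)"
  assumes K: "1128 \<le> K" "K \<le> 1208" and t: "p \<le> t" "t \<le> K / 1728"
  shows "(t - p)^2 / (p * (1 - p)) \<le> 41/1000"
proof -
  have p: "0 < p" "p < 1" unfolding p_def using K by auto
  have "(t - p)^2 / (p * (1 - p)) \<le> (K / 1728 - p)^2 / (p * (1 - p))"
    using t p by (intro divide_right_mono power_mono) auto
  also have "\<dots> = K * (K - 928)^2 / (1728^2 * 800)"
    using K unfolding p_def by (simp add: divide_simps power2_eq_square) algebra
  also have "\<dots> \<le> 1208 * 280^2 / (1728^2 * 800)"
    using K by (intro divide_right_mono mult_mono power_mono) auto
  also have "\<dots> \<le> 41/1000"
    by simp
  finally show ?thesis .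
qed

lemma qj_power_nth_le_entropy_far:
  fixes m d :: nat
  defines "K \<equiv> 1728 - exp (2 * pi)"
  assumes m: "1 \<le> m" and d: "1 \<le> d" and far: "K * real m < 800 * real d"
    and ratio: "1728 * real d < K * real (m + d)"
  shows "fps_nth (qj_fps ^ (m + d)) d \<le> K ^ d * real (m + d) ^ (m + d) / (real m ^ m * real d ^ d)"
proof -
  define R where "R = m + d"
  \<comment> \<open>p = K x / (1 + K x) at x = 1/800, so that (1 + K x)^R / x^d = K^d / (p^d (1 - p)^m)\<close>
  define p where "p = K / (800 + K)"
  have K: "1128 \<le> K" "K \<le> 1208" using exp_two_pi_bounds unfolding K_def by auto
  have p: "0 < p" "p < 1" unfolding p_def using K by auto
  have R: "0 < real R" unfolding R_def using d by simp
  have "(real d - real R * p)^2 / (real R * p * (1 - p))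
      = real R * ((real d / real R - p)^2 / (p * (1 - p)))"
    using R p by (simp add: field_simps power2_eq_square)
  also have "\<dots> \<le> real R * (41/1000)"
  proof (intro mult_left_mono)
    show "(real d / real R - p)^2 / (p * (1 - p)) \<le> 41/1000"
      using far ratio K R unfolding p_def R_def
      by (intro chi_square_distance_le) (simp_all add: field_simps)
  qed (use R in simp)
  finally have chi: "(real d - real R * p)^2 / (real R * p * (1 - p)) \<le> 41/1000 * real R"
    by simp
  have "fps_nth (qj_fps ^ R) d \<le> qj_majorant (1/800) ^ R * 800 ^ d"
    using qj_power_nth_le[of "1/800" R d] by (simp add: power_divide)
  also have "\<dots> \<le> (959/1000 * (1 + K/800)) ^ R * 800 ^ d"
    using qj_majorant_800 K by (intro mult_right_mono power_mono) (auto simp: qj_majorant_def)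
  also have "\<dots> \<le> (exp (- 41/1000) * (1 + K/800)) ^ R * 800 ^ d"
    using K exp_ge_add_one_self[of "- 41/1000"] by (intro mult_right_mono power_mono) auto
  also have "\<dots> = exp (- (41/1000 * real R)) * (1 + K/800) ^ R * 800 ^ d"
    by (simp add: power_mult_distrib exp_of_nat_mult[symmetric])
  also have "\<dots> \<le> exp (- ((real d - real R * p)^2 / (real R * p * (1 - p)))) * (1 + K/800) ^ R * 800 ^ d"
    using chi K by (intro mult_right_mono) auto
  also have "\<dots> \<le> real R ^ R / (real m ^ m * real d ^ d) * p ^ d * (1 - p) ^ m * (1 + K/800) ^ R * 800 ^ d"
    using binomial_weight_ge_exp_chi_square[OF _ _ p, of m d] m d K unfolding R_def
    by (intro mult_right_mono) auto
  also have "\<dots> = K ^ d * real R ^ R / (real m ^ m * real d ^ d)"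
  proof -
    have "p * (1 + K/800) * 800 = K" "(1 - p) * (1 + K/800) = 1"
      using K unfolding p_def by (simp_all add: field_simps)
    moreover have "p ^ d * ((1 - p) ^ m * ((1 + K/800) ^ R * 800 ^ d))
        = (p * (1 + K/800) * 800) ^ d * ((1 - p) * (1 + K/800)) ^ m"
      unfolding R_def power_add power_mult_distrib by (simp only: mult_ac)
    ultimately show ?thesis by (simp add: mult.assoc)
  qed
  finally show ?thesis unfolding R_def .
qed

lemma qj_power_nth_le_entropy:
  fixes a b :: nat
  assumes b: "1 \<le> b" "b < a" and ratio: "cconst * real a < real b"
  shows "fps_nth (qj_fps ^ a) (a - b)
           \<le> (1728 - exp (2 * pi)) ^ (a - b) * real a ^ a / (real b ^ b * real (a - b) ^ (a - b))"
proof -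
  define d where "d = a - b"
  have a: "a = b + d" and d: "1 \<le> d" using b unfolding d_def by auto
  have "fps_nth (qj_fps ^ (b + d)) d
      \<le> (1728 - exp (2 * pi)) ^ d * real (b + d) ^ (b + d) / (real b ^ b * real d ^ d)"
  proof (cases "800 * real d \<le> (1728 - exp (2 * pi)) * real b")
    case True
    with b(1) d show ?thesis by (rule qj_power_nth_le_entropy_near)
  next
    case False
    have "1728 * real d < (1728 - exp (2 * pi)) * real (b + d)"
      using ratio unfolding a by (simp add: cconst_def field_simps)
    then show ?thesis using b(1) d False by (intro qj_power_nth_le_entropy_far) auto
  qed
  then show ?thesis unfolding d_def using b by simp
qed

section \<open>Products along a decreasing chain\<close>

lemma mean_power_le_prod_self_power:
  fixes f :: "'i \<Rightarrow> nat"
  assumes A: "finite A" "A \<noteq> {}" and f: "\<And>r. r \<in> A \<Longrightarrow> 0 < f r"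
  shows "(real (\<Sum>r\<in>A. f r) / real (card A)) ^ (\<Sum>r\<in>A. f r) \<le> (\<Prod>r\<in>A. real (f r) ^ f r)"
proof -
  define u where "u = (\<Sum>r\<in>A. f r)"
  define \<mu> where "\<mu> = real u / real (card A)"
  have "0 < u" unfolding u_def using A f by (intro sum_pos) auto
  then have \<mu>: "0 < \<mu>" unfolding \<mu>_def using A by (simp add: card_gt_0_iff)
  have gibbs: "real (f r) * ln \<mu> - real (f r) * ln (real (f r)) \<le> \<mu> - real (f r)"
    if r: "r \<in> A" for r
  proof -
    have fr: "0 < real (f r)" using f[OF r] by simp
    have "ln (\<mu> / real (f r)) \<le> \<mu> / real (f r) - 1"
      using \<mu> fr by (intro ln_le_minus_one) simp
    then have "real (f r) * (ln \<mu> - ln (real (f r))) \<le> real (f r) * (\<mu> / real (f r) - 1)"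
      using \<mu> fr by (intro mult_left_mono) (simp_all add: ln_divide_pos)
    then show ?thesis using fr by (simp add: algebra_simps)
  qed
  have "real u * ln \<mu> - (\<Sum>r\<in>A. real (f r) * ln (real (f r)))
      = (\<Sum>r\<in>A. real (f r) * ln \<mu> - real (f r) * ln (real (f r)))"
    unfolding u_def by (simp add: sum_subtractf sum_distrib_right)
  also have "\<dots> \<le> (\<Sum>r\<in>A. \<mu> - real (f r))"
    using gibbs by (rule sum_mono)
  also have "\<dots> = 0"
    using A unfolding \<mu>_def u_def by (simp add: sum_subtractf)
  finally have "real u * ln \<mu> \<le> (\<Sum>r\<in>A. real (f r) * ln (real (f r)))"
    by simp
  also have "\<dots> = ln (\<Prod>r\<in>A. real (f r) ^ f r)"
    using A f by (subst ln_prod) (auto simp: ln_realpow)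
  finally have "ln (\<mu> ^ u) \<le> ln (\<Prod>r\<in>A. real (f r) ^ f r)"
    using \<mu> by (simp add: ln_realpow)
  then show ?thesis
    using \<mu> f unfolding \<mu>_def u_def by (simp add: prod_pos)
qed

lemma decreasing_chain_bounds:
  fixes f :: "nat \<Rightarrow> 'a::order"
  assumes dec: "\<forall>r<s. f (Suc r) \<le> f r" and r: "r \<le> s"
  shows "f s \<le> f r" "f r \<le> f 0"
proof -
  show "f s \<le> f r"
    using r
  proof (induction r rule: inc_induct)
    case (step r)
    have "f (Suc r) \<le> f r" using dec step.hyps by simp
    with step.IH show ?case by (rule order.trans)
  qed simp
  show "f r \<le> f 0"
    using r
  proof (induction r)
    case (Suc r)
    have "f (Suc r) \<le> f r" using dec Suc.prems by simp
    also have "f r \<le> f 0" using Suc by simp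
    finally show ?case .
  qed simp
qed

lemma sum_decrements_eq:
  fixes f :: "nat \<Rightarrow> nat"
  assumes "\<forall>r<s. f (Suc r) \<le> f r"
  shows "(\<Sum>r<s. f r - f (Suc r)) = f 0 - f s"
  using assms
proof (induction s)
  case (Suc s)
  have "f (Suc s) \<le> f s" "f s \<le> f 0"
    using Suc.prems decreasing_chain_bounds(2)[of s f s] by auto
  then show ?case using Suc by simp
qed simp

lemma prod_decrements_self_power_ge:
  fixes I :: "nat \<Rightarrow> nat"
  assumes s: "1 \<le> s" and dec: "\<forall>r<s. I (Suc r) < I r"
  shows "(real (I 0 - I s) / real s) ^ (I 0 - I s)
           \<le> (\<Prod>r<s. real (I r - I (Suc r)) ^ (I r - I (Suc r)))"
proof -
  have "(\<Sum>r<s. I r - I (Suc r)) = I 0 - I s"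
    using dec by (intro sum_decrements_eq) (auto simp: less_imp_le)
  moreover have "(real (\<Sum>r<s. I r - I (Suc r)) / real (card {..<s})) ^ (\<Sum>r<s. I r - I (Suc r))
      \<le> (\<Prod>r<s. real (I r - I (Suc r)) ^ (I r - I (Suc r)))"
    using s dec by (intro mean_power_le_prod_self_power) (auto simp: lessThan_empty_iff)
  ultimately show ?thesis by simp
qed

lemma prod_chain_le_div_mean_power:
  fixes I :: "nat \<Rightarrow> nat" and x C :: "nat \<Rightarrow> real"
  assumes s: "1 \<le> s" and dec: "\<forall>r<s. I (Suc r) < I r"
    and x: "\<And>r. r < s \<Longrightarrow> 0 \<le> x r \<and> x r \<le> C r / real (I r - I (Suc r)) ^ (I r - I (Suc r))"
  shows "(\<Prod>r<s. x r) \<le> (\<Prod>r<s. C r) / (real (I 0 - I s) / real s) ^ (I 0 - I s)"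
proof -
  let ?\<delta> = "\<lambda>r. I r - I (Suc r)"
  have \<delta>: "0 < real (?\<delta> r) ^ ?\<delta> r" if "r < s" for r
    using dec that by simp
  have C: "0 \<le> C r" if "r < s" for r
    using x[OF that] \<delta>[OF that] by (metis order.trans zero_le_divide_iff not_less)
  have "(\<Prod>r<s. x r) \<le> (\<Prod>r<s. C r / real (?\<delta> r) ^ ?\<delta> r)"
    using x by (intro prod_mono) auto
  also have "\<dots> = (\<Prod>r<s. C r) / (\<Prod>r<s. real (?\<delta> r) ^ ?\<delta> r)"
    by (rule prod_dividef)
  also have "\<dots> \<le> (\<Prod>r<s. C r) / (real (I 0 - I s) / real s) ^ (I 0 - I s)"
  proof (intro divide_left_mono mult_pos_pos prod_nonneg prod_pos)
    show "(real (I 0 - I s) / real s) ^ (I 0 - I s) \<le> (\<Prod>r<s. real (?\<delta> r) ^ ?\<delta> r)"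
      using s dec by (rule prod_decrements_self_power_ge)
    have "I s \<le> I 1" "I 1 < I 0"
      using decreasing_chain_bounds(1)[of s I 1] dec s by (auto simp: less_imp_le)
    then show "0 < (real (I 0 - I s) / real s) ^ (I 0 - I s)"
      using s by simp
  qed (use C \<delta> in auto)
  finally show ?thesis .
qed

lemma scaled_power_ratio_le:
  fixes a u s :: nat
  assumes u: "1 \<le> u" "u \<le> a" and s: "1 \<le> s"
  shows "(3300 * real a * real s / real u) ^ u \<le> (2393 * real s) ^ a * 1.45 ^ u"
proof -
  have "(real a / real u) ^ u = (1 + (real a - real u) / real u) ^ u"
    using u by (simp add: field_simps)
  also have "\<dots> \<le> exp (real a - real u)"
    using u by (intro exp_ge_one_plus_x_over_n_power_n) auto
  also have "\<dots> = exp 1 ^ (a - u)"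
    using u by (simp add: exp_of_nat_mult[symmetric] of_nat_diff)
  also have "\<dots> \<le> 2393 ^ (a - u)"
    using exp_le by (intro power_mono) auto
  finally have ratio: "(real a / real u) ^ u \<le> 2393 ^ (a - u)" .
  have "(3300 * real a * real s / real u) ^ u = 3300 ^ u * real s ^ u * (real a / real u) ^ u"
    by (simp add: power_mult_distrib power_divide)
  also have "\<dots> \<le> (2393 * 1.45) ^ u * real s ^ a * 2393 ^ (a - u)"
    using ratio u s by (intro mult_mono power_mono power_increasing) auto
  also have "\<dots> = 1.45 ^ u * real s ^ a * (2393 ^ u * 2393 ^ (a - u))"
    by (simp only: power_mult_distrib mult_ac)
  also have "2393 ^ u * 2393 ^ (a - u) = (2393 :: real) ^ a"
    using u by (simp add: power_add[symmetric])
  also have "1.45 ^ u * real s ^ a * 2393 ^ a = (2393 * real s) ^ a * 1.45 ^ u"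
    by (simp only: power_mult_distrib mult_ac)
  finally show ?thesis .
qed

lemma qj_chain_product_le_uniform:
  fixes I :: "nat \<Rightarrow> nat"
  assumes s: "1 \<le> s" and dec: "\<forall>r<s. I (Suc r) < I r"
  shows "(\<Prod>r<s. fps_nth (qj_fps ^ I r) (I r - I (Suc r)))
           \<le> (2393 * real s) ^ I 0 * 1.45 ^ (I 0 - I s)"
proof -
  define a u where "a = I 0" and "u = I 0 - I s"
  have "(\<Prod>r<s. fps_nth (qj_fps ^ I r) (I r - I (Suc r)))
      \<le> (\<Prod>r<s. (3300 * real a) ^ (I r - I (Suc r))) / (real u / real s) ^ u"
    unfolding u_def
  proof (rule prod_chain_le_div_mean_power[OF s dec], intro conjI)
    fix r assume r: "r < s"
    show "0 \<le> fps_nth (qj_fps ^ I r) (I r - I (Suc r))"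
      using fps_nonneg_power[OF fps_nonneg_qj] unfolding fps_nonneg_def ..
    have "I r \<le> a"
      using decreasing_chain_bounds(2)[of s I r] dec r unfolding a_def by (simp add: less_imp_le)
    with r dec have "fps_nth (qj_fps ^ I r) (I r - I (Suc r))
        \<le> (3300 * real a / real (I r - I (Suc r))) ^ (I r - I (Suc r))"
      by (intro order.trans[OF qj_power_nth_le_uniform] power_mono divide_right_mono) auto
    then show "fps_nth (qj_fps ^ I r) (I r - I (Suc r))
        \<le> (3300 * real a) ^ (I r - I (Suc r)) / real (I r - I (Suc r)) ^ (I r - I (Suc r))"
      by (simp add: power_divide)
  qed
  also have "(\<Prod>r<s. (3300 * real a) ^ (I r - I (Suc r))) = (3300 * real a) ^ u"
    using sum_decrements_eq[of s I] dec unfolding u_def power_sum[symmetric]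
    by (simp add: less_imp_le del: power_mult_distrib)
  also have "(3300 * real a) ^ u / (real u / real s) ^ u = (3300 * real a * real s / real u) ^ u"
    by (simp add: power_divide power_mult_distrib)
  also have "\<dots> \<le> (2393 * real s) ^ a * 1.45 ^ u"
  proof (rule scaled_power_ratio_le)
    have "I s \<le> I 1" "I 1 < I 0"
      using decreasing_chain_bounds(1)[of s I 1] dec s by (auto simp: less_imp_le)
    then show "1 \<le> u" "u \<le> a" unfolding a_def u_def by auto
  qed (use s in simp)
  finally show ?thesis unfolding a_def u_def .
qed

lemma qj_chain_product_le_entropy:
  fixes I :: "nat \<Rightarrow> nat"
  defines "K \<equiv> 1728 - exp (2 * pi)"
  assumes s: "1 \<le> s" and dec: "\<forall>r<s. I (Suc r) < I r"
    and ratio: "cconst * real (I 0) < real (I s)"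
  shows "(\<Prod>r<s. fps_nth (qj_fps ^ I r) (I r - I (Suc r)))
           \<le> K ^ (I 0 - I s) * real s ^ (I 0 - I s) * real (I 0) ^ I 0
               / (real (I s) ^ I s * real (I 0 - I s) ^ (I 0 - I s))"
proof -
  define u where "u = I 0 - I s"
  define g where "g r = real (I r) ^ I r" for r
  have bounds: "I s \<le> I r" "I r \<le> I 0" if "r \<le> s" for r
    using decreasing_chain_bounds[of s I r] dec that by (auto simp: less_imp_le)
  have "0 \<le> cconst * real (I 0)" unfolding cconst_def by simp
  with ratio have Is: "1 \<le> I s" by simp
  have "(\<Prod>r<s. fps_nth (qj_fps ^ I r) (I r - I (Suc r)))
      \<le> (\<Prod>r<s. K ^ (I r - I (Suc r)) * (g r / g (Suc r))) / (real u / real s) ^ u"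
    unfolding u_def
  proof (rule prod_chain_le_div_mean_power[OF s dec], intro conjI)
    fix r assume r: "r < s"
    show "0 \<le> fps_nth (qj_fps ^ I r) (I r - I (Suc r))"
      using fps_nonneg_power[OF fps_nonneg_qj] unfolding fps_nonneg_def ..
    have "cconst * real (I r) \<le> cconst * real (I 0)"
      using bounds(2)[of r] r unfolding cconst_def by (intro mult_left_mono) auto
    also have "\<dots> < real (I (Suc r))"
      using ratio bounds(1)[of "Suc r"] r by simp
    finally show "fps_nth (qj_fps ^ I r) (I r - I (Suc r))
        \<le> K ^ (I r - I (Suc r)) * (g r / g (Suc r)) / real (I r - I (Suc r)) ^ (I r - I (Suc r))"
      using Is bounds(1)[of "Suc r"] dec r unfolding K_def g_def
      by (simp only: times_divide_eq_right divide_divide_eq_left)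
        (intro qj_power_nth_le_entropy, auto)
  qed
  also have "(\<Prod>r<s. K ^ (I r - I (Suc r)) * (g r / g (Suc r))) = K ^ u * (g 0 / g s)"
  proof -
    have "(\<Prod>r<s. g r / g (Suc r)) = g 0 / g s"
      using Is bounds(1) unfolding g_def by (intro prod_lessThan_telescope') fastforce
    moreover have "(\<Prod>r<s. K ^ (I r - I (Suc r))) = K ^ u"
      using sum_decrements_eq[of s I] dec unfolding u_def power_sum[symmetric]
      by (simp add: less_imp_le)
    ultimately show ?thesis by (simp only: prod.distrib)
  qed
  also have "K ^ u * (g 0 / g s) / (real u / real s) ^ u
      = K ^ u * real s ^ u * real (I 0) ^ I 0 / (real (I s) ^ I s * real u ^ u)"
    unfolding g_def
    by (simp only: power_divide divide_divide_eq_right divide_divide_eq_left times_divide_eq_right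
        mult_ac)
  finally show ?thesis unfolding u_def .
qed

lemma jcoeff_eq_qj_power_nth:
  assumes "k \<le> r"
  shows "jcoeff r (- int k) = fps_nth (qj_fps ^ r) (r - k)"
  using assms by (simp add: jcoeff_def nat_diff_distrib' of_nat_diff)

lemma nat_chain_decreasing:
  fixes ii :: "nat \<Rightarrow> int"
  assumes "0 \<le> ii s" and dec: "\<forall>r<s. ii (Suc r) < ii r"
  shows "\<forall>r<s. nat (ii (Suc r)) < nat (ii r)"
proof (intro allI impI)
  fix r assume r: "r < s"
  have "ii s \<le> ii (Suc r)"
    using decreasing_chain_bounds(1)[of s ii "Suc r"] dec r by (auto simp: less_imp_le)
  with assms r show "nat (ii (Suc r)) < nat (ii r)" by auto
qed

lemma jcoeff_chain_product_eq:
  fixes ii :: "nat \<Rightarrow> int"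
  assumes "0 \<le> ii s" and "\<forall>r<s. ii (Suc r) < ii r"
  shows "(\<Prod>r<s. jcoeff (nat (ii r)) (- ii (Suc r)))
           = (\<Prod>r<s. fps_nth (qj_fps ^ nat (ii r)) (nat (ii r) - nat (ii (Suc r))))"
proof (rule prod.cong)
  fix r assume r: "r \<in> {..<s}"
  have "ii s \<le> ii (Suc r)"
    using decreasing_chain_bounds(1)[of s ii "Suc r"] assms(2) r by (auto simp: less_imp_le)
  then have "- ii (Suc r) = - int (nat (ii (Suc r)))" using assms(1) by simp
  moreover have "nat (ii (Suc r)) \<le> nat (ii r)" using assms(2) r by auto
  ultimately show "jcoeff (nat (ii r)) (- ii (Suc r))
      = fps_nth (qj_fps ^ nat (ii r)) (nat (ii r) - nat (ii (Suc r)))"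
    by (simp only: jcoeff_eq_qj_power_nth)
qed simp

lemma T2'_le_power:
  assumes "i \<le> j" "j \<le> D"
  shows "T2' D i j s \<le> (5849 * real s) ^ nat (D - i) * 1.5 ^ nat (D - j)"
proof -
  have "T2' D i j s \<le> (2393 * real s) ^ nat (D - i) * 1.45 ^ nat (D - i)"
    unfolding T2'_def using assms by (intro mult_left_mono power_increasing) auto
  also have "\<dots> \<le> (5849 * real s) ^ nat (D - i)"
    unfolding power_mult_distrib[symmetric] by (intro power_mono) auto
  also have "\<dots> \<le> (5849 * real s) ^ nat (D - i) * 1.5 ^ nat (D - j)"
    using mult_left_mono[OF one_le_power[of "1.5 :: real" "nat (D - j)"], of "(5849 * real s) ^ nat (D - i)"]
    by simp
  finally show ?thesis .
qed

theorem mainTheorem15: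
  fixes D i j :: int and s :: nat and ii :: "nat \<Rightarrow> int"
  assumes "0 \<le> i" and "i < j" and "j \<le> D" and "s \<ge> 1"
    and "ii s = D - j" and "ii 0 = D - i"
    and "\<forall>r<s. ii (Suc r) < ii r"
  shows "(\<Prod>r<s. jcoeff (nat (ii r)) (- ii (Suc r)))
            \<le> Max {T1 D i j s, T2 D i j s, T2' D i j s, T3 D i j s, T3' D i j s, T4 D i j s}
         \<and> (real_of_int (D - j) > cconst * real_of_int (D - i) \<longrightarrow>
           (\<Prod>r<s. jcoeff (nat (ii r)) (- ii (Suc r))) \<le> T1 D i j s)
         \<and> ((\<Prod>r<s. jcoeff (nat (ii r)) (- ii (Suc r)))
            \<le> max (T1 D i j s) ((5849 * real s) ^ nat (D - i) * 1.5 ^ nat (D - j)))"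
proof -
  define I where "I r = nat (ii r)" for r
  have dec: "\<forall>r<s. I (Suc r) < I r"
    unfolding I_def using assms by (intro nat_chain_decreasing) auto
  have P: "(\<Prod>r<s. jcoeff (nat (ii r)) (- ii (Suc r)))
      = (\<Prod>r<s. fps_nth (qj_fps ^ I r) (I r - I (Suc r)))"
    unfolding I_def using assms by (intro jcoeff_chain_product_eq) auto
  have ends: "I 0 = nat (D - i)" "I s = nat (D - j)" "nat (D - i) - nat (D - j) = nat (j - i)"
    "real (nat (D - i)) = real_of_int (D - i)" "real (nat (D - j)) = real_of_int (D - j)"
    "real (nat (j - i)) = real_of_int (j - i)"
    using assms unfolding I_def by auto
  have "(\<Prod>r<s. jcoeff (nat (ii r)) (- ii (Suc r))) \<le> T2' D i j s"
    using qj_chain_product_le_uniform[OF assms(4) dec] unfolding P T2'_def ends .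
  moreover have "T2' D i j s \<le> Max {T1 D i j s, T2 D i j s, T2' D i j s, T3 D i j s, T3' D i j s, T4 D i j s}"
    by (intro Max_ge) auto
  moreover have "(\<Prod>r<s. jcoeff (nat (ii r)) (- ii (Suc r))) \<le> T1 D i j s"
    if "real_of_int (D - j) > cconst * real_of_int (D - i)"
    using qj_chain_product_le_entropy[OF assms(4) dec] that unfolding P T1_def ends by blast
  moreover have "T2' D i j s \<le> (5849 * real s) ^ nat (D - i) * 1.5 ^ nat (D - j)"
    using assms by (intro T2'_le_power) auto
  ultimately show ?thesis
    by (meson max.coboundedI2 order.trans)
qed

end
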